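(* For every $1\le t\le m$ there exists a deterministic voting rule taking top-$t$ preference profiles as input that has metric distortion $O(m-t+1)$ and utilitarian distortion $O(m^2)$.
   Context: Setting: $n$ agents, $m$ alternatives; each agent has an underlying strict ranking, but the rule only receives each agent's ordered list of her top $t$ alternatives (a top-$t$ profile $\vec\sigma_t$). A full profile extends $\vec\sigma_t$ if each agent's top-$t$ prefix coincides with that in $\vec\sigma_t$. Metric framework: a pseudometric $d$ on agents and alternatives is consistent with a full profile $\vec\sigma$ if $X\succ_iY\Rightarrow d(i,X)\le d(i,Y)$, and consistent with $\vec\sigma_t$ if it is consistent with some full profile extending $\vec\sigma_t$. $\mathrm{SC}(X,d)=\sum_id(i,X)$. Metric distortion of a (top-$t$) rule $f$: $\sup_{\vec\sigma_t}\sup_{d}\mathbb E_{X\sim f(\vec\sigma_t)}[\mathrm{SC}(X,d)]/\min_X\mathrm{SC}(X,d)$ over consistent $d$. Utilitarian framework: unit-sum nonnegative utilities $u_i$ ($\sum_Xu_i(X)=1$), consistent with a full profile if $X\succ_iY\Rightarrow u_i(X)\ge u_i(Y)$ and with $\vec\sigma_t$ if consistent with some full extension. $\mathrm{SW}(X,\vec u)=\sum_iu_i(X)$. Utilitarian distortion: $\sup_{\vec\sigma_t}\sup_{\vec u}\max_X\mathrm{SW}(X,\vec u)/\mathbb E_{X\sim f(\vec\sigma_t)}[\mathrm{SW}(X,\vec u)]$. *)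

theory Defs
  imports Complex_Main "HOL-Library.Extended_Real"
begin

text \<open>Alternatives are 0..<m, agents are 0..<n (list positions). A ranking (full or top-t)
is a list of alternatives, most preferred first. A profile is a nonempty list of rankings.\<close>

definition is_ranking :: "nat \<Rightarrow> nat list \<Rightarrow> bool" where
  "is_ranking m r \<longleftrightarrow> distinct r \<and> set r = {..<m}"

definition is_top_list :: "nat \<Rightarrow> nat \<Rightarrow> nat list \<Rightarrow> bool" where
  "is_top_list m t r \<longleftrightarrow> distinct r \<and> length r = t \<and> set r \<subseteq> {..<m}"

definition full_profile :: "nat \<Rightarrow> nat list list \<Rightarrow> bool" where
  "full_profile m P \<longleftrightarrow> P \<noteq> [] \<and> (\<forall>r\<in>set P. is_ranking m r)"

definition top_profile :: "nat \<Rightarrow> nat \<Rightarrow> nat list list \<Rightarrow> bool" where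
  "top_profile m t P \<longleftrightarrow> P \<noteq> [] \<and> (\<forall>r\<in>set P. is_top_list m t r)"

definition extends_top :: "nat \<Rightarrow> nat list list \<Rightarrow> nat list list \<Rightarrow> bool" where
  "extends_top t Pf P \<longleftrightarrow> length Pf = length P \<and> (\<forall>i<length P. take t (Pf ! i) = P ! i)"

definition prefers :: "nat list \<Rightarrow> nat \<Rightarrow> nat \<Rightarrow> bool" where
  "prefers r X Y \<longleftrightarrow> (\<exists>i j. i < j \<and> j < length r \<and> r ! i = X \<and> r ! j = Y)"

definition voting_rule :: "nat \<Rightarrow> nat \<Rightarrow> (nat list list \<Rightarrow> nat) \<Rightarrow> bool" where
  "voting_rule m t f \<longleftrightarrow> (\<forall>P. top_profile m t P \<longrightarrow> f P < m)"

text \<open>Points: agents Inl i (i<n), alternatives Inr X (X<m).\<close>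
definition points :: "nat \<Rightarrow> nat \<Rightarrow> (nat + nat) set" where
  "points n m = Inl ` {..<n} \<union> Inr ` {..<m}"

definition pseudometric_on :: "(nat + nat) set \<Rightarrow> ((nat + nat) \<Rightarrow> (nat + nat) \<Rightarrow> real) \<Rightarrow> bool" where
  "pseudometric_on S d \<longleftrightarrow>
     (\<forall>x\<in>S. d x x = 0) \<and>
     (\<forall>x\<in>S. \<forall>y\<in>S. 0 \<le> d x y \<and> d x y = d y x) \<and>
     (\<forall>x\<in>S. \<forall>y\<in>S. \<forall>z\<in>S. d x z \<le> d x y + d y z)"

definition metric_consistent_full :: "nat list list \<Rightarrow> ((nat + nat) \<Rightarrow> (nat + nat) \<Rightarrow> real) \<Rightarrow> bool" where
  "metric_consistent_full P d \<longleftrightarrow>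
     (\<forall>i<length P. \<forall>X Y. prefers (P ! i) X Y \<longrightarrow> d (Inl i) (Inr X) \<le> d (Inl i) (Inr Y))"

definition metric_consistent_top :: "nat \<Rightarrow> nat \<Rightarrow> nat list list \<Rightarrow> ((nat + nat) \<Rightarrow> (nat + nat) \<Rightarrow> real) \<Rightarrow> bool" where
  "metric_consistent_top m t P d \<longleftrightarrow>
     (\<exists>Pf. full_profile m Pf \<and> extends_top t Pf P \<and> metric_consistent_full Pf d)"

definition SC :: "nat \<Rightarrow> ((nat + nat) \<Rightarrow> (nat + nat) \<Rightarrow> real) \<Rightarrow> nat \<Rightarrow> real" where
  "SC n d X = (\<Sum>i<n. d (Inl i) (Inr X))"

text \<open>Metric distortion of a deterministic top-t rule (ratio in ereal: a/0 = \<infinity> for a>0, 0/0 = 0).\<close>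
definition metric_distortion :: "nat \<Rightarrow> nat \<Rightarrow> (nat list list \<Rightarrow> nat) \<Rightarrow> ereal" where
  "metric_distortion m t f =
     (SUP Pd \<in> {(P, d). top_profile m t P \<and> pseudometric_on (points (length P) m) d
                        \<and> metric_consistent_top m t P d}.
        ereal (SC (length (fst Pd)) (snd Pd) (f (fst Pd)))
        / ereal (Min ((\<lambda>X. SC (length (fst Pd)) (snd Pd) X) ` {..<m})))"

definition unit_sum_utils :: "nat \<Rightarrow> nat \<Rightarrow> (nat \<Rightarrow> nat \<Rightarrow> real) \<Rightarrow> bool" where
  "unit_sum_utils n m u \<longleftrightarrow> (\<forall>i<n. (\<forall>X<m. 0 \<le> u i X) \<and> (\<Sum>X<m. u i X) = 1)"

definition util_consistent_full :: "nat list list \<Rightarrow> (nat \<Rightarrow> nat \<Rightarrow> real) \<Rightarrow> bool" where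
  "util_consistent_full P u \<longleftrightarrow>
     (\<forall>i<length P. \<forall>X Y. prefers (P ! i) X Y \<longrightarrow> u i X \<ge> u i Y)"

definition util_consistent_top :: "nat \<Rightarrow> nat \<Rightarrow> nat list list \<Rightarrow> (nat \<Rightarrow> nat \<Rightarrow> real) \<Rightarrow> bool" where
  "util_consistent_top m t P u \<longleftrightarrow>
     (\<exists>Pf. full_profile m Pf \<and> extends_top t Pf P \<and> util_consistent_full Pf u)"

definition SW :: "nat \<Rightarrow> (nat \<Rightarrow> nat \<Rightarrow> real) \<Rightarrow> nat \<Rightarrow> real" where
  "SW n u X = (\<Sum>i<n. u i X)"

definition util_distortion :: "nat \<Rightarrow> nat \<Rightarrow> (nat list list \<Rightarrow> nat) \<Rightarrow> ereal" where
  "util_distortion m t f =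
     (SUP Pu \<in> {(P, u). top_profile m t P \<and> unit_sum_utils (length P) m u
                        \<and> util_consistent_top m t P u}.
        ereal (Max ((\<lambda>X. SW (length (fst Pu)) (snd Pu) X) ` {..<m}))
        / ereal (SW (length (fst Pu)) (snd Pu) (f (fst Pu))))"

end

theory Submission
  imports Defs
begin

text \<open>
  The rule is a sequential veto. Every alternative that is the top choice of at least a
  \<open>1/(2m)\<close> fraction of the agents (a heavy alternative) starts with \<open>2(m-t+1)\<close> points per
  such agent. The agents then veto in turn: each removes one point from every surviving
  alternative she does not rank, or, if there is none, from the last surviving alternative she
  ranks. The total initial score exceeds \<open>(m-t+1) n\<close>, while each agent removes at most
  \<open>m-t+1\<close> points, so some alternative \<open>A\<close> survives; the rule selects it.

  Metric distortion: every agent is at least as close to some alternative she vetoes as to \<open>A\<close>,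
  so \<open>SC(A)\<close> is at most the total distance of agents to their vetoed alternatives. Routing this
  through any \<open>B\<close>, the agent terms give \<open>(m-t+1) SC(B)\<close>; an alternative \<open>c\<close> is vetoed at most
  \<open>2(m-t+1)\<close> times per agent ranking it first, and \<open>d(B,c) \<le> 2 d(i,B)\<close> for such an agent \<open>i\<close>,
  which gives another \<open>4(m-t+1) SC(B)\<close>.

  Utilitarian distortion: \<open>A\<close> is heavy, and every agent gives utility at least \<open>1/m\<close> to her top
  alternative, so \<open>SW(A) \<ge> n/(2m\<^sup>2)\<close>, whereas every welfare is at most \<open>n\<close>.
\<close>

definition plurality_count :: "nat list list \<Rightarrow> nat \<Rightarrow> nat" where
  "plurality_count P c = (\<Sum>j<length P. if hd (P ! j) = c then 1 else 0)"

definition heavy :: "nat \<Rightarrow> nat list list \<Rightarrow> nat \<Rightarrow> bool" where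
  "heavy m P c \<longleftrightarrow> c < m \<and> length P \<le> 2 * m * plurality_count P c"

definition initial_score :: "nat \<Rightarrow> nat \<Rightarrow> nat list list \<Rightarrow> nat \<Rightarrow> nat" where
  "initial_score m t P c = (if heavy m P c then 2 * (m - t + 1) * plurality_count P c else 0)"

definition unranked_alive :: "nat \<Rightarrow> nat list \<Rightarrow> (nat \<Rightarrow> nat) \<Rightarrow> nat set" where
  "unranked_alive m r s = {c. c < m \<and> 0 < s c \<and> c \<notin> set r}"

definition vetoed :: "nat \<Rightarrow> nat list \<Rightarrow> (nat \<Rightarrow> nat) \<Rightarrow> nat set" where
  "vetoed m r s =
     (if unranked_alive m r s \<noteq> {} then unranked_alive m r s
      else if \<exists>j<length r. 0 < s (r ! j) then {r ! (GREATEST j. j < length r \<and> 0 < s (r ! j))}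
      else {})"

definition veto_step :: "nat set \<Rightarrow> (nat \<Rightarrow> nat) \<Rightarrow> nat \<Rightarrow> nat" where
  "veto_step V s c = (if c \<in> V then s c - 1 else s c)"

primrec veto_scores :: "nat \<Rightarrow> nat \<Rightarrow> nat list list \<Rightarrow> nat \<Rightarrow> nat \<Rightarrow> nat" where
  "veto_scores m t P 0 = initial_score m t P"
| "veto_scores m t P (Suc v) = veto_step (vetoed m (P ! v) (veto_scores m t P v)) (veto_scores m t P v)"

abbreviation vetoes :: "nat \<Rightarrow> nat \<Rightarrow> nat list list \<Rightarrow> nat \<Rightarrow> nat set" where
  "vetoes m t P v \<equiv> vetoed m (P ! v) (veto_scores m t P v)"

definition veto_count :: "nat \<Rightarrow> nat \<Rightarrow> nat list list \<Rightarrow> nat \<Rightarrow> nat \<Rightarrow> nat" where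
  "veto_count m t P v c = (\<Sum>u<v. if c \<in> vetoes m t P u then 1 else 0)"

definition veto_rule :: "nat \<Rightarrow> nat \<Rightarrow> nat list list \<Rightarrow> nat" where
  "veto_rule m t P = (LEAST c. 0 < veto_scores m t P (length P) c)"

lemma prefers_ranked_unranked:
  assumes "is_ranking m \<sigma>" "X \<in> set (take t \<sigma>)" "Y < m" "Y \<notin> set (take t \<sigma>)"
  shows "prefers \<sigma> X Y"
proof -
  obtain p where p: "p < length (take t \<sigma>)" "take t \<sigma> ! p = X"
    using assms(2) by (auto simp: in_set_conv_nth)
  have "Y \<in> set \<sigma>" using assms(1,3) by (auto simp: is_ranking_def)
  then obtain q where q: "q < length \<sigma>" "\<sigma> ! q = Y" by (auto simp: in_set_conv_nth)
  have unranked: "\<not> q < length (take t \<sigma>)"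
    using q assms(4) by (metis nth_mem nth_take length_take min_less_iff_conj)
  show ?thesis
    unfolding prefers_def by (rule exI[of _ p], rule exI[of _ q]) (use p q unranked in auto)
qed

lemma prefers_take_nth:
  assumes "p < q" "q < length (take t \<sigma>)"
  shows "prefers \<sigma> (take t \<sigma> ! p) (take t \<sigma> ! q)"
  unfolding prefers_def by (rule exI[of _ p], rule exI[of _ q]) (use assms in auto)

lemma hd_ranking_minimal:
  fixes \<delta> :: "nat \<Rightarrow> real"
  assumes "is_ranking m \<sigma>" "Y < m" and mono: "\<And>X Y. prefers \<sigma> X Y \<Longrightarrow> \<delta> X \<le> \<delta> Y"
  shows "\<delta> (hd \<sigma>) \<le> \<delta> Y"
proof -
  have "Y \<in> set \<sigma>" using assms(1,2) by (auto simp: is_ranking_def)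
  then obtain q where q: "q < length \<sigma>" "\<sigma> ! q = Y" by (auto simp: in_set_conv_nth)
  have hd0: "hd \<sigma> = \<sigma> ! 0" using q by (cases \<sigma>) auto
  show ?thesis
  proof (cases "q = 0")
    case True
    then show ?thesis using q hd0 by simp
  next
    case False
    have "prefers \<sigma> (hd \<sigma>) Y"
      unfolding prefers_def by (rule exI[of _ 0], rule exI[of _ q]) (use q False hd0 in auto)
    then show ?thesis by (rule mono)
  qed
qed

lemma metric_consistent_top_row:
  assumes "metric_consistent_top m t P d" "v < length P"
  obtains \<sigma> where "is_ranking m \<sigma>" "take t \<sigma> = P ! v"
    "\<And>X Y. prefers \<sigma> X Y \<Longrightarrow> d (Inl v) (Inr X) \<le> d (Inl v) (Inr Y)"
  using assms unfolding metric_consistent_top_def full_profile_def extends_top_def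
    metric_consistent_full_def by (metis nth_mem)

lemma util_consistent_top_row:
  assumes "util_consistent_top m t P u" "v < length P"
  obtains \<sigma> where "is_ranking m \<sigma>" "take t \<sigma> = P ! v"
    "\<And>X Y. prefers \<sigma> X Y \<Longrightarrow> u v Y \<le> u v X"
  using assms unfolding util_consistent_top_def full_profile_def extends_top_def
    util_consistent_full_def by (metis nth_mem)

lemma pseudometric_close_via_agent:
  assumes "pseudometric_on S d" "x \<in> S" "y \<in> S" "z \<in> S" "d x z \<le> d x y"
  shows "d y z \<le> 2 * d x y"
proof -
  have "d y z \<le> d y x + d x z" "d y x = d x y"
    using assms(1-4) unfolding pseudometric_on_def by blast+
  then show ?thesis using assms(5) by linarith
qed

lemma unit_sum_max_ge:
  fixes u :: "nat \<Rightarrow> real"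
  assumes "(\<Sum>X<m. u X) = 1" "0 < m" "\<And>X. X < m \<Longrightarrow> u X \<le> u T"
  shows "1 / real m \<le> u T"
proof -
  have "1 \<le> (\<Sum>X<m. u T)" using assms(1,3) sum_mono[of "{..<m}" u "\<lambda>_. u T"] by simp
  then show ?thesis using assms(2) by (simp add: divide_le_eq mult.commute)
qed

lemma greatest_alive:
  assumes "j < length r" "0 < s (r ! j)"
  defines "g \<equiv> GREATEST j. j < length r \<and> 0 < s (r ! j)"
  shows "j \<le> g" "g < length r" "0 < s (r ! g)"
  using assms GreatestI_nat[of "\<lambda>j. j < length r \<and> 0 < s (r ! j)" j "length r"]
    Greatest_le_nat[of "\<lambda>j. j < length r \<and> 0 < s (r ! j)" j "length r"]
  by auto

lemma vetoed_last_ranked: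
  assumes "unranked_alive m r s = {}" "p < length r" "0 < s (r ! p)"
  obtains g where "p \<le> g" "g < length r" "0 < s (r ! g)" "vetoed m r s = {r ! g}"
proof -
  define g where "g = (GREATEST j. j < length r \<and> 0 < s (r ! j))"
  have "vetoed m r s = {r ! g}" using assms unfolding vetoed_def g_def by auto
  then show ?thesis using that greatest_alive[of p r s] assms(2,3) unfolding g_def by blast
qed

lemma vetoed_cases:
  assumes "c \<in> vetoed m r s"
  obtains "c \<in> unranked_alive m r s" | "c \<in> set r" "0 < s c"
proof (cases "unranked_alive m r s = {}")
  case False
  then show ?thesis using that assms by (simp add: vetoed_def)
next
  case True
  then obtain j where "j < length r" "0 < s (r ! j)"
    using assms by (auto simp: vetoed_def split: if_splits)
  with True obtain g where "g < length r" "0 < s (r ! g)" "vetoed m r s = {r ! g}"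
    by (rule vetoed_last_ranked)
  then show ?thesis using that assms by auto
qed

lemma vetoed_pos: "c \<in> vetoed m r s \<Longrightarrow> 0 < s c"
  by (erule vetoed_cases) (auto simp: unranked_alive_def)

lemma vetoed_subset: "set r \<subseteq> {..<m} \<Longrightarrow> vetoed m r s \<subseteq> {..<m}"
  by (auto simp: unranked_alive_def elim: vetoed_cases)

lemma card_vetoed:
  assumes "distinct r" "set r \<subseteq> {..<m}"
  shows "card (vetoed m r s) \<le> m - length r + 1"
proof -
  have "card (unranked_alive m r s) \<le> card ({..<m} - set r)"
    unfolding unranked_alive_def by (intro card_mono) auto
  also have "\<dots> = m - length r"
    using assms by (simp add: card_Diff_subset distinct_card)
  finally show ?thesis unfolding vetoed_def by auto
qed

text \<open>Either \<open>A\<close> itself is vetoed, or the agent ranks \<open>A\<close> above a vetoed alternative.\<close>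

lemma vetoed_dominates:
  fixes \<delta> :: "nat \<Rightarrow> real"
  assumes \<sigma>: "is_ranking m \<sigma>" and A: "A < m" "0 < s A"
    and mono: "\<And>X Y. prefers \<sigma> X Y \<Longrightarrow> \<delta> X \<le> \<delta> Y" and nonneg: "\<And>c. c < m \<Longrightarrow> 0 \<le> \<delta> c"
  shows "\<delta> A \<le> (\<Sum>c\<in>vetoed m (take t \<sigma>) s. \<delta> c)"
proof -
  let ?r = "take t \<sigma>"
  let ?V = "vetoed m ?r s"
  have "?V \<subseteq> {..<m}"
    using \<sigma> by (intro vetoed_subset) (auto simp: is_ranking_def dest: in_set_takeD)
  then have single: "\<delta> c \<le> (\<Sum>c\<in>?V. \<delta> c)" if "c \<in> ?V" for c
    using that nonneg by (intro member_le_sum) (auto intro: finite_subset)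
  have "\<exists>c\<in>?V. \<delta> A \<le> \<delta> c"
  proof (cases "unranked_alive m ?r s = {}")
    case False
    then have V: "?V = unranked_alive m ?r s" by (simp add: vetoed_def)
    show ?thesis
    proof (cases "A \<in> set ?r")
      case True
      from False obtain c where c: "c \<in> ?V" using V by blast
      then have "prefers \<sigma> A c"
        using V True by (intro prefers_ranked_unranked[OF \<sigma>]) (auto simp: unranked_alive_def)
      then show ?thesis using c mono by blast
    next
      case False
      then show ?thesis using V A by (auto simp: unranked_alive_def)
    qed
  next
    case True
    then have "A \<in> set ?r" using A unfolding unranked_alive_def by auto
    then obtain p where p: "p < length ?r" "?r ! p = A" by (auto simp: in_set_conv_nth)
    with True A obtain g where "p \<le> g" "g < length ?r" and V: "?V = {?r ! g}"
      by (metis vetoed_last_ranked)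
    then have "\<delta> A \<le> \<delta> (?r ! g)"
      using prefers_take_nth[of p g t \<sigma>] mono p by (cases "p = g") auto
    then show ?thesis using V by auto
  qed
  then show ?thesis using single by force
qed

lemma veto_scores_plus_veto_count:
  "veto_scores m t P v c + veto_count m t P v c = initial_score m t P c"
proof (induction v)
  case 0
  then show ?case by (simp add: veto_count_def)
next
  case (Suc v)
  have "c \<in> vetoes m t P v \<Longrightarrow> 0 < veto_scores m t P v c" by (rule vetoed_pos)
  then show ?case using Suc.IH by (auto simp: veto_count_def veto_step_def)
qed

lemma veto_scores_antimono:
  "v \<le> w \<Longrightarrow> veto_scores m t P w c \<le> veto_scores m t P v c"
  by (induction w rule: dec_induct) (auto simp: veto_step_def)

lemma sum_sets_by_multiplicity:
  fixes x :: "nat \<Rightarrow> 'a::comm_semiring_1"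
  assumes "\<And>v. v < n \<Longrightarrow> R v \<subseteq> {..<m}"
  shows "(\<Sum>v<n. \<Sum>c\<in>R v. x c) = (\<Sum>c<m. of_nat (\<Sum>v<n. if c \<in> R v then 1 else 0) * x c)"
proof -
  have "(\<Sum>v<n. \<Sum>c\<in>R v. x c) = (\<Sum>v<n. \<Sum>c<m. if c \<in> R v then x c else 0)"
  proof (rule sum.cong[OF refl])
    fix v assume "v \<in> {..<n}"
    then have "{..<m} \<inter> R v = R v" using assms by auto
    then show "(\<Sum>c\<in>R v. x c) = (\<Sum>c<m. if c \<in> R v then x c else 0)"
      by (simp add: sum.If_cases)
  qed
  also have "\<dots> = (\<Sum>c<m. \<Sum>v<n. if c \<in> R v then x c else 0)" by (rule sum.swap)
  also have "\<dots> = (\<Sum>c<m. of_nat (\<Sum>v<n. if c \<in> R v then 1 else 0) * x c)"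
    by (auto simp: sum_distrib_right intro!: sum.cong)
  finally show ?thesis .
qed

lemma sum_plurality_count_weighted:
  fixes x :: "nat \<Rightarrow> 'a::comm_semiring_1"
  assumes "\<And>j. j < length P \<Longrightarrow> hd (P ! j) < m"
  shows "(\<Sum>c<m. of_nat (plurality_count P c) * x c) = (\<Sum>j<length P. x (hd (P ! j)))"
proof -
  have "(\<Sum>c<m. of_nat (plurality_count P c) * x c)
      = (\<Sum>j<length P. \<Sum>c<m. if hd (P ! j) = c then x c else 0)"
    unfolding plurality_count_def
    by (subst sum.swap) (auto simp: sum_distrib_right intro!: sum.cong)
  also have "\<dots> = (\<Sum>j<length P. x (hd (P ! j)))"
    using assms by (intro sum.cong) auto
  finally show ?thesis .
qed

context
  fixes m t :: nat and P :: "nat list list"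
  assumes profile: "top_profile m t P" and t_pos: "1 \<le> t"
begin

lemma row_top_list: "v < length P \<Longrightarrow> is_top_list m t (P ! v)"
  using profile unfolding top_profile_def by auto

lemma hd_row_lt: "v < length P \<Longrightarrow> hd (P ! v) < m"
  using row_top_list t_pos unfolding is_top_list_def
  by (metis hd_in_set le_zero_eq length_0_conv lessThan_iff not_one_le_zero subsetD)

lemma profile_nonempty: "0 < length P"
  using profile unfolding top_profile_def by simp

lemma t_le_m: "t \<le> m"
proof -
  have "is_top_list m t (P ! 0)" using row_top_list profile_nonempty by blast
  then show ?thesis
    unfolding is_top_list_def by (metis card_lessThan card_mono distinct_card finite_lessThan)
qed

lemma vetoes_subset: "v < length P \<Longrightarrow> vetoes m t P v \<subseteq> {..<m}"
  using row_top_list vetoed_subset unfolding is_top_list_def by blast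

lemma card_vetoes: "v < length P \<Longrightarrow> card (vetoes m t P v) \<le> m - t + 1"
  using row_top_list card_vetoed unfolding is_top_list_def by fastforce

lemma sum_card_vetoes:
  fixes x :: "nat \<Rightarrow> 'a::comm_semiring_1"
  shows "(\<Sum>v<length P. \<Sum>c\<in>vetoes m t P v. x c) = (\<Sum>c<m. of_nat (veto_count m t P (length P) c) * x c)"
  unfolding veto_count_def using vetoes_subset by (rule sum_sets_by_multiplicity)

text \<open>Non-heavy alternatives together collect fewer than half of the first places.\<close>

lemma sum_initial_score_ge: "(m - t + 1) * (length P + 1) \<le> (\<Sum>c<m. initial_score m t P c)"
proof -
  let ?n = "length P"
  let ?light = "\<Sum>c<m. if heavy m P c then 0 else plurality_count P c"
  let ?heavy = "\<Sum>c<m. if heavy m P c then plurality_count P c else 0"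
  have "?light + ?heavy = (\<Sum>c<m. plurality_count P c)"
    by (auto simp: sum.distrib[symmetric] intro!: sum.cong)
  also have "\<dots> = ?n" using sum_plurality_count_weighted[of P m "\<lambda>_. 1::nat"] hd_row_lt by simp
  finally have split: "?light + ?heavy = ?n" .
  have "m * (2 * ?light) = (\<Sum>c<m. if heavy m P c then 0 else 2 * m * plurality_count P c)"
    by (auto simp: sum_distrib_left intro!: sum.cong)
  also have "\<dots> \<le> (\<Sum>c<m. ?n - 1)"
    by (intro sum_mono) (auto simp: heavy_def)
  finally have "m * (2 * ?light) \<le> m * (?n - 1)" by simp
  then have "2 * ?light \<le> ?n - 1" using t_le_m t_pos by simp
  then have "?n + 1 \<le> 2 * ?heavy" using split profile_nonempty by linarith
  then have "(m - t + 1) * (?n + 1) \<le> (m - t + 1) * (2 * ?heavy)"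
    by (rule mult_le_mono2)
  also have "\<dots> = (\<Sum>c<m. initial_score m t P c)"
    unfolding initial_score_def by (auto simp: sum_distrib_left intro!: sum.cong)
  finally show ?thesis .
qed

lemma veto_rule_survives: "veto_rule m t P < m" "0 < veto_scores m t P (length P) (veto_rule m t P)"
proof -
  have "\<exists>c<m. 0 < veto_scores m t P (length P) c"
  proof (rule ccontr)
    assume none: "\<not> ?thesis"
    have "initial_score m t P c = veto_count m t P (length P) c" if "c < m" for c
      using none that veto_scores_plus_veto_count[of m t P "length P" c] by (metis add_0 not_gr0)
    then have "(\<Sum>c<m. initial_score m t P c) = (\<Sum>c<m. veto_count m t P (length P) c)"
      by (intro sum.cong) auto
    also have "\<dots> = (\<Sum>v<length P. card (vetoes m t P v))"
      using sum_card_vetoes[of "\<lambda>_. 1::nat"] by simp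
    also have "\<dots> \<le> (\<Sum>v<length P. m - t + 1)"
      using card_vetoes by (intro sum_mono) auto
    finally show False using sum_initial_score_ge by (simp add: algebra_simps)
  qed
  then obtain c where c: "c < m" "0 < veto_scores m t P (length P) c" by blast
  show "0 < veto_scores m t P (length P) (veto_rule m t P)"
    unfolding veto_rule_def using c(2) by (rule LeastI)
  have "veto_rule m t P \<le> c" unfolding veto_rule_def using c by (intro Least_le)
  then show "veto_rule m t P < m" using c by simp
qed

lemma veto_rule_heavy: "heavy m P (veto_rule m t P)"
  using veto_scores_plus_veto_count[of m t P "length P" "veto_rule m t P"] veto_rule_survives(2)
  unfolding initial_score_def by (auto split: if_splits)

lemma sum_veto_count_weighted_le:
  assumes "\<And>c. c < m \<Longrightarrow> 0 \<le> x c"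
  shows "(\<Sum>c<m. real (veto_count m t P (length P) c) * x c)
         \<le> 2 * real (m - t + 1) * (\<Sum>v<length P. x (hd (P ! v)))"
proof -
  have "(\<Sum>c<m. real (veto_count m t P (length P) c) * x c)
        \<le> (\<Sum>c<m. 2 * real (m - t + 1) * (real (plurality_count P c) * x c))"
  proof (rule sum_mono)
    fix c assume "c \<in> {..<m}"
    have "veto_count m t P (length P) c \<le> 2 * (m - t + 1) * plurality_count P c"
      using veto_scores_plus_veto_count[of m t P "length P" c] unfolding initial_score_def
      by (auto split: if_splits)
    then have "real (veto_count m t P (length P) c) \<le> 2 * real (m - t + 1) * real (plurality_count P c)"
      by (metis of_nat_le_iff of_nat_mult of_nat_numeral)
    then show "real (veto_count m t P (length P) c) * x c
               \<le> 2 * real (m - t + 1) * (real (plurality_count P c) * x c)"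
      using assms \<open>c \<in> {..<m}\<close> by (simp add: mult.assoc[symmetric] mult_right_mono)
  qed
  also have "\<dots> = 2 * real (m - t + 1) * (\<Sum>c<m. real (plurality_count P c) * x c)"
    by (rule sum_distrib_left[symmetric])
  also have "\<dots> = 2 * real (m - t + 1) * (\<Sum>v<length P. x (hd (P ! v)))"
    using sum_plurality_count_weighted[of P m x] hd_row_lt by simp
  finally show ?thesis .
qed

lemma SC_veto_rule_le:
  assumes pm: "pseudometric_on (points (length P) m) d" and mc: "metric_consistent_top m t P d"
    and B: "B < m"
  shows "SC (length P) d (veto_rule m t P) \<le> 5 * real (m - t + 1) * SC (length P) d B"
proof -
  let ?n = "length P" and ?k = "real (m - t + 1)" and ?A = "veto_rule m t P"
  let ?x = "\<lambda>c. d (Inr B) (Inr c)"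
  have ptl: "Inl v \<in> points ?n m" if "v < ?n" for v
    using that unfolding points_def by auto
  have ptr: "Inr c \<in> points ?n m" if "c < m" for c
    using that unfolding points_def by auto
  have dnn: "0 \<le> d p q" if "p \<in> points ?n m" "q \<in> points ?n m" for p q
    using pm that unfolding pseudometric_on_def by blast
  have dtri: "d p r \<le> d p q + d q r" if "p \<in> points ?n m" "q \<in> points ?n m" "r \<in> points ?n m" for p q r
    using pm that unfolding pseudometric_on_def by blast
  have agent: "d (Inl v) (Inr ?A) \<le> (\<Sum>c\<in>vetoes m t P v. d (Inl v) (Inr c))"
    and top: "?x (hd (P ! v)) \<le> 2 * d (Inl v) (Inr B)" if v: "v < ?n" for v
  proof -
    obtain \<sigma> where \<sigma>: "is_ranking m \<sigma>" "take t \<sigma> = P ! v"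
      and mono: "\<And>X Y. prefers \<sigma> X Y \<Longrightarrow> d (Inl v) (Inr X) \<le> d (Inl v) (Inr Y)"
      using metric_consistent_top_row[OF mc v] by blast
    have "0 < veto_scores m t P v ?A"
      using veto_rule_survives(2) veto_scores_antimono[of v "length P" m t P ?A] v by simp
    then have "d (Inl v) (Inr ?A) \<le> (\<Sum>c\<in>vetoed m (take t \<sigma>) (veto_scores m t P v). d (Inl v) (Inr c))"
      by (intro vetoed_dominates[OF \<sigma>(1) veto_rule_survives(1)]) (use mono dnn ptl ptr v in auto)
    then show "d (Inl v) (Inr ?A) \<le> (\<Sum>c\<in>vetoes m t P v. d (Inl v) (Inr c))"
      using \<sigma>(2) by simp
    have "hd (P ! v) = hd \<sigma>" using \<sigma>(2) t_pos by (metis hd_take less_le_trans zero_less_one)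
    then have "d (Inl v) (Inr (hd (P ! v))) \<le> d (Inl v) (Inr B)"
      using hd_ranking_minimal[OF \<sigma>(1) B, of "\<lambda>X. d (Inl v) (Inr X)"] mono by simp
    then show "?x (hd (P ! v)) \<le> 2 * d (Inl v) (Inr B)"
      by (rule pseudometric_close_via_agent[OF pm ptl[OF v] ptr[OF B] ptr[OF hd_row_lt[OF v]]])
  qed
  have hd_sum: "(\<Sum>v<?n. ?x (hd (P ! v))) \<le> 2 * SC ?n d B"
    unfolding SC_def sum_distrib_left using top by (intro sum_mono) auto
  have k_sum: "(\<Sum>v<?n. ?k * d (Inl v) (Inr B)) = ?k * SC ?n d B"
    by (simp add: SC_def sum_distrib_left)
  have "SC ?n d ?A \<le> (\<Sum>v<?n. \<Sum>c\<in>vetoes m t P v. d (Inl v) (Inr c))"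
    unfolding SC_def using agent by (intro sum_mono) auto
  also have "\<dots> \<le> (\<Sum>v<?n. \<Sum>c\<in>vetoes m t P v. d (Inl v) (Inr B) + ?x c)"
  proof (intro sum_mono)
    fix v c assume v: "v \<in> {..<?n}" and c: "c \<in> vetoes m t P v"
    then have "c < m" using vetoes_subset by blast
    then show "d (Inl v) (Inr c) \<le> d (Inl v) (Inr B) + ?x c"
      using dtri ptl ptr v B by auto
  qed
  also have "\<dots> = (\<Sum>v<?n. real (card (vetoes m t P v)) * d (Inl v) (Inr B))
                  + (\<Sum>c<m. real (veto_count m t P ?n c) * ?x c)"
    by (simp add: sum.distrib sum_card_vetoes)
  also have "\<dots> \<le> (\<Sum>v<?n. ?k * d (Inl v) (Inr B)) + 2 * ?k * (\<Sum>v<?n. ?x (hd (P ! v)))"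
  proof (intro add_mono sum_mono mult_right_mono)
    fix v assume "v \<in> {..<?n}"
    then show "real (card (vetoes m t P v)) \<le> ?k" "0 \<le> d (Inl v) (Inr B)"
      using card_vetoes dnn ptl ptr B by (auto simp del: of_nat_Suc)
  next
    show "(\<Sum>c<m. real (veto_count m t P ?n c) * ?x c) \<le> 2 * ?k * (\<Sum>v<?n. ?x (hd (P ! v)))"
      using dnn ptr B by (intro sum_veto_count_weighted_le) auto
  qed
  also have "\<dots> \<le> ?k * SC ?n d B + 2 * ?k * (2 * SC ?n d B)"
    unfolding k_sum by (intro add_left_mono mult_left_mono hd_sum) auto
  also have "\<dots> = 5 * ?k * SC ?n d B"
    by (simp add: algebra_simps)
  finally show ?thesis .
qed

lemma SW_veto_rule_ge:
  assumes us: "unit_sum_utils (length P) m u" and uc: "util_consistent_top m t P u"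
  shows "real (length P) / (2 * (real m)\<^sup>2) \<le> SW (length P) u (veto_rule m t P)"
proof -
  let ?n = "length P" and ?A = "veto_rule m t P"
  have m_pos: "0 < m" using t_le_m t_pos by simp
  have top: "1 / real m \<le> u v (hd (P ! v))" if v: "v < ?n" for v
  proof -
    obtain \<sigma> where \<sigma>: "is_ranking m \<sigma>" "take t \<sigma> = P ! v"
      and mono: "\<And>X Y. prefers \<sigma> X Y \<Longrightarrow> u v Y \<le> u v X"
      using util_consistent_top_row[OF uc v] by blast
    have "hd (P ! v) = hd \<sigma>" using \<sigma>(2) t_pos by (metis hd_take less_le_trans zero_less_one)
    then have "u v X \<le> u v (hd (P ! v))" if "X < m" for X
      using hd_ranking_minimal[OF \<sigma>(1) that, of "\<lambda>X. - u v X"] mono by simp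
    then show ?thesis
      using us v m_pos unfolding unit_sum_utils_def by (intro unit_sum_max_ge) auto
  qed
  have "real (plurality_count P ?A) / real m = (\<Sum>v<?n. if hd (P ! v) = ?A then 1 / real m else 0)"
    unfolding plurality_count_def by (auto simp: sum_divide_distrib intro!: sum.cong)
  also have "\<dots> \<le> SW ?n u ?A"
    unfolding SW_def
  proof (intro sum_mono)
    fix v assume "v \<in> {..<?n}"
    then show "(if hd (P ! v) = ?A then 1 / real m else 0) \<le> u v ?A"
      using top[of v] us veto_rule_survives(1) by (auto simp: unit_sum_utils_def)
  qed
  finally have "real (plurality_count P ?A) / real m \<le> SW ?n u ?A" .
  moreover have "real ?n \<le> 2 * real m * real (plurality_count P ?A)"
    using veto_rule_heavy unfolding heavy_def by (metis of_nat_le_iff of_nat_mult of_nat_numeral)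
  then have "real ?n / (2 * (real m)\<^sup>2) \<le> real (plurality_count P ?A) / real m"
    using m_pos by (simp add: divide_le_eq power2_eq_square field_simps)
  ultimately show ?thesis by linarith
qed

end

lemma ereal_divide_le_ereal:
  assumes "0 \<le> a" "0 \<le> b" "0 \<le> C" "a \<le> C * b"
  shows "ereal a / ereal b \<le> ereal C"
proof (cases "b = 0")
  case True
  then show ?thesis using assms by simp
next
  case False
  then show ?thesis using assms by (simp add: divide_le_eq mult.commute)
qed

lemma voting_rule_veto_rule: "1 \<le> t \<Longrightarrow> voting_rule m t (veto_rule m t)"
  unfolding voting_rule_def using veto_rule_survives(1) by blast

lemma metric_distortion_veto_rule:
  assumes "1 \<le> t"
  shows "metric_distortion m t (veto_rule m t) \<le> ereal (5 * real (m - t + 1))"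
  unfolding metric_distortion_def
proof (rule SUP_least, clarify, unfold fst_conv snd_conv)
  fix P d
  assume P: "top_profile m t P" and pm: "pseudometric_on (points (length P) m) d"
    and mc: "metric_consistent_top m t P d"
  let ?SC = "\<lambda>X. SC (length P) d X"
  have "m \<noteq> 0" using t_le_m[OF P assms] assms by simp
  then have "Min (?SC ` {..<m}) \<in> ?SC ` {..<m}" by (intro Min_in) auto
  then obtain B where B: "B < m" "Min (?SC ` {..<m}) = ?SC B" by auto
  have "0 \<le> ?SC B"
    using pm B(1) unfolding SC_def pseudometric_on_def points_def by (auto intro!: sum_nonneg)
  moreover have "0 \<le> ?SC (veto_rule m t P)"
    using pm veto_rule_survives(1)[OF P assms]
    unfolding SC_def pseudometric_on_def points_def by (auto intro!: sum_nonneg)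
  ultimately show "ereal (?SC (veto_rule m t P)) / ereal (Min (?SC ` {..<m}))
      \<le> ereal (5 * real (m - t + 1))"
    unfolding B(2) using SC_veto_rule_le[OF P assms pm mc B(1)]
    by (intro ereal_divide_le_ereal) auto
qed

lemma util_distortion_veto_rule:
  assumes "1 \<le> t"
  shows "util_distortion m t (veto_rule m t) \<le> ereal (2 * (real m)\<^sup>2)"
  unfolding util_distortion_def
proof (rule SUP_least, clarify, unfold fst_conv snd_conv)
  fix P u
  assume P: "top_profile m t P" and us: "unit_sum_utils (length P) m u"
    and uc: "util_consistent_top m t P u"
  let ?n = "length P" and ?SW = "\<lambda>X. SW (length P) u X"
  have m_pos: "0 < m" using t_le_m[OF P assms] assms by simp
  then have "Max (?SW ` {..<m}) \<in> ?SW ` {..<m}" by (intro Max_in) auto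
  then obtain X where X: "X < m" "Max (?SW ` {..<m}) = ?SW X" by auto
  have u: "0 \<le> u i X" "u i X \<le> 1" if "i < ?n" for i
    using us that X(1) member_le_sum[of X "{..<m}" "u i"] unfolding unit_sum_utils_def by auto
  have low: "real ?n / (2 * (real m)\<^sup>2) \<le> ?SW (veto_rule m t P)"
    by (rule SW_veto_rule_ge[OF P assms us uc])
  have "0 \<le> ?SW X" "?SW X \<le> real ?n"
    using u sum_mono[of "{..<?n}" "\<lambda>i. u i X" "\<lambda>_. 1"] unfolding SW_def
    by (auto intro: sum_nonneg)
  moreover have "0 \<le> ?SW (veto_rule m t P)"
    using low by (rule order_trans[rotated]) simp
  moreover have "real ?n \<le> 2 * (real m)\<^sup>2 * ?SW (veto_rule m t P)"
    using low m_pos by (simp add: divide_le_eq mult.commute)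
  ultimately show "ereal (Max (?SW ` {..<m})) / ereal (?SW (veto_rule m t P))
      \<le> ereal (2 * (real m)\<^sup>2)"
    unfolding X(2) by (intro ereal_divide_le_ereal) auto
qed

theorem mainTheorem9:
  shows "\<exists>C1 C2 :: real. 0 < C1 \<and> 0 < C2 \<and>
    (\<forall>m t :: nat. 1 \<le> t \<and> t \<le> m \<longrightarrow>
      (\<exists>f. voting_rule m t f
         \<and> metric_distortion m t f \<le> ereal (C1 * real (m - t + 1))
         \<and> util_distortion m t f \<le> ereal (C2 * (real m)^2)))"
proof (rule exI[of _ 5], rule exI[of _ 2], intro conjI allI impI)
  fix m t :: nat
  assume "1 \<le> t \<and> t \<le> m"
  then have "1 \<le> t" by simp
  then show "\<exists>f. voting_rule m t f
      \<and> metric_distortion m t f \<le> ereal (5 * real (m - t + 1))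
      \<and> util_distortion m t f \<le> ereal (2 * (real m)^2)"
    using voting_rule_veto_rule metric_distortion_veto_rule util_distortion_veto_rule by blast
qed simp_all

end
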